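(* Let $f,g:\mathbb R_+\to\mathbb R_+$ be increasing functions with $f$ differentiable and $-f(0)<g(0)$. Let $(\Omega,\mathcal F,(\mathcal F_n)_{n\ge0},\mathbb P)$ be a filtered probability space and $(M_n)_{n\ge0}$ a supermartingale with $M_n\ge -f(n)$ for all integers $n\ge0$ and $\mathbb E[M_0]\in[-f(0),g(0)]$. Then \[ \mathbb P\{\exists n\ge0: M_n\ge g(n)\}\;\le\;1-\frac{g(0)-\mathbb E[M_0]}{g(0)+f(0)}\exp\Big(-\int_0^\infty\frac{f'(t)}{g(t)+f(t)}\,dt\Big). \]
   Context: An adapted process $(M_n)_{n\ge0}$ is a supermartingale if $\mathbb E[|M_n|]<\infty$ and $\mathbb E[M_{n+1}\mid\mathcal F_n]\le M_n$ for all $n\ge 0$. *)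

theory Defs
  imports "HOL-Probability.Probability"
begin

definition discrete_filtration :: "'a measure \<Rightarrow> (nat \<Rightarrow> 'a measure) \<Rightarrow> bool" where
  "discrete_filtration M F \<longleftrightarrow>
     (\<forall>n. subalgebra M (F n)) \<and> (\<forall>n m. n \<le> m \<longrightarrow> sets (F n) \<subseteq> sets (F m))"

definition supermartingale :: "'a measure \<Rightarrow> (nat \<Rightarrow> 'a measure) \<Rightarrow> (nat \<Rightarrow> 'a \<Rightarrow> real) \<Rightarrow> bool" where
  "supermartingale M F X \<longleftrightarrow>
     (\<forall>n. X n \<in> borel_measurable (F n)) \<and>
     (\<forall>n. integrable M (X n)) \<and>
     (\<forall>n. AE x in M. real_cond_exp M (F n) (X (Suc n)) x \<le> X n x)"

end

theory Submission
  imports Defs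
begin

text \<open>Fix a horizon N and let a_n (crossing_weight) be the product of the ratios
  (g(k+1) + f(k)) / (g(k+1) + f(k+1)) over n <= k < N. The affine functions
  phi_n(x) = 1 - a_n (g(n) - x) / (g(n) + f(n)) (crossing_bound) satisfy phi_n >= 1 on [g(n), oo),
  phi_N >= 0 on [-f(N), oo) and phi_(n+1) <= phi_n on [-f(n), oo). Their slopes are nonnegative,
  so the supermartingale property and backward induction bound the probability of reaching g
  during [n, N], without having reached it before n, by the mean of phi_n(M_n) over that event;
  for n = 0 this is 1 - a_0 (g(0) - E M_0) / (g(0) + f(0)). Finally, -ln of the k-th ratio is the
  integral over [k, k+1] of f'(t) / (g(k+1) + f(t)), which is at most the integral of f' / (g + f)
  there because g increases; so a_0 >= exp (- integral of f' / (g + f) over [0, oo)), and we let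
  N go to infinity.\<close>

lemma integrable_imp_set_integrable:
  fixes f :: "'a \<Rightarrow> 'b::{banach, second_countable_topology}"
  shows "A \<in> sets M \<Longrightarrow> integrable M f \<Longrightarrow> set_integrable M A f"
  unfolding set_integrable_def by (rule integrable_mult_indicator)

lemma mono_on_Ici_imp_deriv_nonneg:
  fixes f :: "real \<Rightarrow> real"
  assumes mono: "mono_on {a..} f" and "a \<le> t"
    and deriv: "(f has_real_derivative D) (at t within {a..})"
  shows "0 \<le> D"
proof (rule tendsto_lowerbound)
  have "(f has_real_derivative D) (at t within {t..})"
    using \<open>a \<le> t\<close> by (intro DERIV_subset[OF deriv]) auto
  then show "((\<lambda>y. (f y - f t) / (y - t)) \<longlongrightarrow> D) (at_right t)"
    by (simp add: has_field_derivative_iff at_within_Ici_at_right)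
  show "\<forall>\<^sub>F y in at_right t. 0 \<le> (f y - f t) / (y - t)"
    using eventually_at_right_less[of t]
  proof eventually_elim
    case (elim y)
    then show ?case using mono_onD[OF mono, of t y] \<open>a \<le> t\<close> by simp
  qed
qed simp

lemma borel_measurable_derivative_Ici:
  fixes f f' :: "real \<Rightarrow> real"
  assumes deriv: "\<And>t. a \<le> t \<Longrightarrow> (f has_real_derivative f' t) (at t within {a..})"
  shows "(\<lambda>t. indicator {a..} t * f' t) \<in> borel_measurable borel"
proof -
  let ?F = "\<lambda>t. indicator {a..} t * f t"
  have "continuous_on {a..} f"
    using deriv by (intro DERIV_continuous_on) auto
  then have [measurable]: "?F \<in> borel_measurable borel"
    using borel_measurable_continuous_on_indicator[of "{a..}" f] by simp
  show ?thesis
  proof (rule borel_measurable_LIMSEQ_real)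
    fix t :: real
    show "(\<lambda>i. indicator {a..} t * ((?F (t + inverse (Suc i)) - ?F t) * Suc i))
        \<longlonglongrightarrow> indicator {a..} t * f' t"
    proof (cases "a \<le> t")
      case True
      have "t + inverse (Suc i) \<in> {a..} \<and> t + inverse (Suc i) \<noteq> t" for i :: nat
        using True by (auto intro: add_increasing2)
      moreover have "(\<lambda>i. t + inverse (Suc i)) \<longlonglongrightarrow> t"
        using tendsto_add[OF tendsto_const LIMSEQ_inverse_real_of_nat, of t] by simp
      ultimately have "filterlim (\<lambda>i. t + inverse (Suc i)) (at t within {a..}) sequentially"
        by (simp add: filterlim_at)
      moreover have "((\<lambda>y. (f y - f t) / (y - t)) \<longlongrightarrow> f' t) (at t within {a..})"
        using deriv[OF True] by (simp add: has_field_derivative_iff)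
      ultimately have "(\<lambda>i. (f (t + inverse (Suc i)) - f t) / (t + inverse (Suc i) - t)) \<longlonglongrightarrow> f' t"
        by (rule filterlim_compose[rotated])
      then show ?thesis
        using True by (simp add: divide_inverse add_increasing2)
    qed simp
  qed measurable
qed

locale discrete_supermartingale = prob_space M for M :: "'a measure" +
  fixes F :: "nat \<Rightarrow> 'a measure" and X :: "nat \<Rightarrow> 'a \<Rightarrow> real"
  assumes filtration: "discrete_filtration M F"
    and supermartingale: "supermartingale M F X"
begin

lemma subalgebra_filtration: "subalgebra M (F n)"
  using filtration unfolding discrete_filtration_def by blast

lemma integrable_X: "integrable M (X n)"
  using supermartingale unfolding supermartingale_def by blast

lemma adapted_X: "k \<le> n \<Longrightarrow> X k \<in> borel_measurable (F n)"
proof -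
  assume "k \<le> n"
  then have "subalgebra (F n) (F k)"
    using filtration subalgebra_filtration unfolding discrete_filtration_def subalgebra_def by auto
  moreover have "X k \<in> borel_measurable (F k)"
    using supermartingale unfolding supermartingale_def by blast
  ultimately show ?thesis by (rule measurable_from_subalg)
qed

lemma borel_measurable_X [measurable]: "X n \<in> borel_measurable M"
  using measurable_from_subalg[OF subalgebra_filtration adapted_X] by blast

lemma set_integral_Suc_le:
  assumes B: "B \<in> sets (F n)"
  shows "(\<integral>x\<in>B. X (Suc n) x \<partial>M) \<le> (\<integral>x\<in>B. X n x \<partial>M)"
proof -
  interpret finite_measure_subalgebra M "F n"
    using subalgebra_filtration finite_measure_axioms
    by (simp add: finite_measure_subalgebra_def finite_measure_subalgebra_axioms_def)
  have "B \<in> sets M" using B subalgebra_filtration unfolding subalgebra_def by blast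
  have "(\<integral>x\<in>B. X (Suc n) x \<partial>M) = (\<integral>x\<in>B. real_cond_exp M (F n) (X (Suc n)) x \<partial>M)"
    by (rule real_cond_exp_intA[OF integrable_X B])
  also have "\<dots> \<le> (\<integral>x\<in>B. X n x \<partial>M)"
  proof (rule set_integral_mono_AE)
    show "set_integrable M B (real_cond_exp M (F n) (X (Suc n)))"
      using \<open>B \<in> sets M\<close> real_cond_exp_int(1)[OF integrable_X]
      by (rule integrable_imp_set_integrable)
    show "set_integrable M B (X n)"
      using \<open>B \<in> sets M\<close> integrable_X by (rule integrable_imp_set_integrable)
    show "AE x\<in>B in M. real_cond_exp M (F n) (X (Suc n)) x \<le> X n x"
      using supermartingale unfolding supermartingale_def by auto
  qed
  finally show ?thesis .
qed

lemma set_integral_affine_Suc_le: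
  assumes "B \<in> sets (F n)" and "0 \<le> b"
  shows "(\<integral>x\<in>B. a + b * X (Suc n) x \<partial>M) \<le> (\<integral>x\<in>B. a + b * X n x \<partial>M)"
proof -
  have "B \<in> sets M" using assms(1) subalgebra_filtration unfolding subalgebra_def by blast
  then have integrable: "set_integrable M B (\<lambda>_. a)" "set_integrable M B (X k)" for k
    by (auto intro: integrable_imp_set_integrable integrable_X)
  show ?thesis
    using mult_left_mono[OF set_integral_Suc_le[OF assms(1)] assms(2)]
    by (simp add: integrable)
qed

end

definition crossing_ratio :: "(nat \<Rightarrow> real) \<Rightarrow> (nat \<Rightarrow> real) \<Rightarrow> nat \<Rightarrow> real" where
  "crossing_ratio f g k = (g (Suc k) + f k) / (g (Suc k) + f (Suc k))"

definition crossing_weight :: "(nat \<Rightarrow> real) \<Rightarrow> (nat \<Rightarrow> real) \<Rightarrow> nat \<Rightarrow> nat \<Rightarrow> real" where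
  "crossing_weight f g N n = (\<Prod>k\<in>{n..<N}. crossing_ratio f g k)"

definition crossing_bound :: "(nat \<Rightarrow> real) \<Rightarrow> (nat \<Rightarrow> real) \<Rightarrow> nat \<Rightarrow> nat \<Rightarrow> real \<Rightarrow> real" where
  "crossing_bound f g N n x = 1 - crossing_weight f g N n * (g n - x) / (g n + f n)"

lemma crossing_bound_affine:
  "crossing_bound f g N n x =
     (1 - crossing_weight f g N n * g n / (g n + f n)) + crossing_weight f g N n / (g n + f n) * x"
  unfolding crossing_bound_def by (simp add: right_diff_distrib diff_divide_distrib)

locale crossing_barriers =
  fixes f g :: "nat \<Rightarrow> real"
  assumes mono_f: "mono f" and mono_g: "mono g" and barriers_apart: "- f 0 < g 0"
begin

lemma barrier_gap_pos: "m \<le> n \<Longrightarrow> 0 < g n + f m"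
  using monoD[OF mono_g, of 0 n] monoD[OF mono_f, of 0 m] barriers_apart by linarith

lemma crossing_ratio_pos: "0 < crossing_ratio f g k"
  unfolding crossing_ratio_def
  using barrier_gap_pos[of k "Suc k"] barrier_gap_pos[of "Suc k" "Suc k"] by simp

lemma crossing_ratio_le_1: "crossing_ratio f g k \<le> 1"
  unfolding crossing_ratio_def using barrier_gap_pos[of k "Suc k"] monoD[OF mono_f, of k "Suc k"]
  by simp

lemma crossing_weight_pos: "0 < crossing_weight f g N n"
  unfolding crossing_weight_def by (simp add: prod_pos crossing_ratio_pos)

lemma crossing_weight_le_1: "crossing_weight f g N n \<le> 1"
  unfolding crossing_weight_def
  by (intro prod_le_1) (simp add: crossing_ratio_le_1 crossing_ratio_pos less_imp_le)

lemma crossing_weight_Suc: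
  "n < N \<Longrightarrow> crossing_weight f g N n = crossing_ratio f g n * crossing_weight f g N (Suc n)"
  unfolding crossing_weight_def by (simp add: prod.atLeast_Suc_lessThan)

lemma one_le_crossing_bound: "g n \<le> x \<Longrightarrow> 1 \<le> crossing_bound f g N n x"
  unfolding crossing_bound_def using crossing_weight_pos[of N n] barrier_gap_pos[of n n]
  by (simp add: mult_nonneg_nonpos divide_nonpos_pos)

lemma crossing_bound_nonneg: "- f N \<le> x \<Longrightarrow> 0 \<le> crossing_bound f g N N x"
  unfolding crossing_bound_def crossing_weight_def using barrier_gap_pos[of N N]
  by (simp add: field_simps)

lemma crossing_bound_Suc_le:
  assumes "n < N" and "- f n \<le> x"
  shows "crossing_bound f g N (Suc n) x \<le> crossing_bound f g N n x"
proof -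
  let ?G = "g (Suc n)" and ?a = "crossing_weight f g N (Suc n)"
  have pos: "0 < g n + f n" "0 < ?G + f (Suc n)"
    using barrier_gap_pos by auto
  have "(?G + f n) * (g n - x) \<le> (?G - x) * (g n + f n)"
    using mult_nonneg_nonneg[of "?G - g n" "f n + x"] monoD[OF mono_g, of n "Suc n"] assms(2)
    by (simp add: algebra_simps)
  then have "(?G + f n) * (g n - x) / (g n + f n) \<le> ?G - x"
    using pos by (simp add: pos_divide_le_eq)
  then have "?a / (?G + f (Suc n)) * ((?G + f n) * (g n - x) / (g n + f n))
      \<le> ?a / (?G + f (Suc n)) * (?G - x)"
    using crossing_weight_pos[of N "Suc n"] pos by (intro mult_left_mono) auto
  then show ?thesis
    unfolding crossing_bound_def crossing_weight_Suc[OF assms(1)] crossing_ratio_def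
    by (simp add: field_simps)
qed

end

locale barrier_supermartingale =
  discrete_supermartingale M F X + crossing_barriers f g
  for M :: "'a measure" and F X f g +
  assumes above_lower_barrier: "\<And>n. AE x in M. - f n \<le> X n x"
begin

definition uncrossed :: "nat \<Rightarrow> 'a set" where
  "uncrossed n = {x \<in> space M. \<forall>k<n. X k x < g k}"

lemma sets_uncrossed [measurable]: "uncrossed n \<in> sets M"
  unfolding uncrossed_def by measurable

lemma uncrossed_Suc_in_filtration: "uncrossed (Suc n) \<in> sets (F n)"
proof -
  have space: "space (F n) = space M"
    using subalgebra_filtration unfolding subalgebra_def by blast
  have "{x \<in> space (F n). X k x < g k} \<in> sets (F n)" if "k \<le> n" for k
  proof -
    have [measurable]: "X k \<in> borel_measurable (F n)" using that by (rule adapted_X)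
    show ?thesis by measurable
  qed
  then have "(\<Inter>k\<in>{..n}. {x \<in> space (F n). X k x < g k}) \<in> sets (F n)"
    by (intro sets.finite_INT) auto
  also have "(\<Inter>k\<in>{..n}. {x \<in> space (F n). X k x < g k}) = uncrossed (Suc n)"
    unfolding uncrossed_def space by (auto simp: less_Suc_eq_le)
  finally show ?thesis .
qed

lemma set_integrable_crossing_bound:
  "A \<in> sets M \<Longrightarrow> set_integrable M A (\<lambda>x. crossing_bound f g N n (X m x))"
  unfolding crossing_bound_affine
  by (intro integrable_imp_set_integrable Bochner_Integration.integrable_add integrable_const
      integrable_mult_right integrable_X)

lemma prob_crossing_now_le:
  "prob {x \<in> uncrossed n. g n \<le> X n x}
     + (\<integral>x\<in>uncrossed (Suc n). crossing_bound f g N n (X n x) \<partial>M)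
   \<le> (\<integral>x\<in>uncrossed n. crossing_bound f g N n (X n x) \<partial>M)"
proof -
  define C where "C = {x \<in> uncrossed n. g n \<le> X n x}"
  let ?\<phi> = "\<lambda>x. crossing_bound f g N n (X n x)"
  have C: "C \<in> sets M" unfolding C_def uncrossed_def by measurable
  have split: "uncrossed n = C \<union> uncrossed (Suc n)" "C \<inter> uncrossed (Suc n) = {}"
    unfolding C_def uncrossed_def by (auto simp: less_Suc_eq)
  have "prob C = (\<integral>x\<in>C. 1 \<partial>M)"
    using C by (simp add: set_integral_const)
  also have "\<dots> \<le> (\<integral>x\<in>C. ?\<phi> x \<partial>M)"
    using C by (intro set_integral_mono set_integrable_crossing_bound one_le_crossing_bound)
      (auto intro: integrable_imp_set_integrable simp: C_def)
  moreover have "(\<integral>x\<in>uncrossed n. ?\<phi> x \<partial>M)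
      = (\<integral>x\<in>C. ?\<phi> x \<partial>M) + (\<integral>x\<in>uncrossed (Suc n). ?\<phi> x \<partial>M)"
    unfolding split(1) using C
    by (intro set_integral_Un split(2) set_integrable_crossing_bound sets_uncrossed)
  ultimately show ?thesis unfolding C_def by simp
qed

lemma set_integral_crossing_bound_Suc_le:
  assumes "n < N"
  shows "(\<integral>x\<in>uncrossed (Suc n). crossing_bound f g N (Suc n) (X (Suc n) x) \<partial>M)
    \<le> (\<integral>x\<in>uncrossed (Suc n). crossing_bound f g N n (X n x) \<partial>M)"
proof -
  have "0 \<le> crossing_weight f g N (Suc n) / (g (Suc n) + f (Suc n))"
    using crossing_weight_pos[of N "Suc n"] barrier_gap_pos[of "Suc n" "Suc n"] by simp
  then have "(\<integral>x\<in>uncrossed (Suc n). crossing_bound f g N (Suc n) (X (Suc n) x) \<partial>M)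
    \<le> (\<integral>x\<in>uncrossed (Suc n). crossing_bound f g N (Suc n) (X n x) \<partial>M)"
    unfolding crossing_bound_affine
    by (rule set_integral_affine_Suc_le[OF uncrossed_Suc_in_filtration])
  also have "\<dots> \<le> (\<integral>x\<in>uncrossed (Suc n). crossing_bound f g N n (X n x) \<partial>M)"
    using above_lower_barrier[of n]
    by (intro set_integral_mono_AE set_integrable_crossing_bound sets_uncrossed)
      (auto intro: crossing_bound_Suc_le[OF assms])
  finally show ?thesis .
qed

lemma prob_crossing_between_le:
  assumes "n \<le> N"
  shows "prob {x \<in> uncrossed n. \<exists>k\<in>{n..N}. g k \<le> X k x}
    \<le> (\<integral>x\<in>uncrossed n. crossing_bound f g N n (X n x) \<partial>M)"
  using assms
proof (induction n rule: inc_induct)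
  case base
  have "AE x in M. 0 \<le> indicator (uncrossed (Suc N)) x *\<^sub>R crossing_bound f g N N (X N x)"
    using above_lower_barrier[of N]
    by eventually_elim (simp add: crossing_bound_nonneg split: split_indicator)
  then have "0 \<le> (\<integral>x\<in>uncrossed (Suc N). crossing_bound f g N N (X N x) \<partial>M)"
    unfolding set_lebesgue_integral_def by (rule integral_nonneg_AE)
  then show ?case
    using prob_crossing_now_le[of N N] by simp
next
  case (step n)
  let ?C = "{x \<in> uncrossed n. g n \<le> X n x}"
  have split: "{x \<in> uncrossed n. \<exists>k\<in>{n..N}. g k \<le> X k x}
      = ?C \<union> {x \<in> uncrossed (Suc n). \<exists>k\<in>{Suc n..N}. g k \<le> X k x}"
    using atLeastAtMost_insertL[of n N] step.hyps unfolding uncrossed_def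
    by (auto simp: less_Suc_eq)
  have "prob {x \<in> uncrossed n. \<exists>k\<in>{n..N}. g k \<le> X k x}
      = prob ?C + prob {x \<in> uncrossed (Suc n). \<exists>k\<in>{Suc n..N}. g k \<le> X k x}"
    unfolding split by (intro finite_measure_Union) (auto simp: uncrossed_def)
  also have "\<dots> \<le> prob ?C + (\<integral>x\<in>uncrossed (Suc n). crossing_bound f g N n (X n x) \<partial>M)"
    using step.IH set_integral_crossing_bound_Suc_le[OF step.hyps(2)] by simp
  also have "\<dots> \<le> (\<integral>x\<in>uncrossed n. crossing_bound f g N n (X n x) \<partial>M)"
    by (rule prob_crossing_now_le)
  finally show ?case .
qed

lemma expectation_crossing_bound:
  "expectation (\<lambda>x. crossing_bound f g N n (X n x)) = crossing_bound f g N n (expectation (X n))"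
  unfolding crossing_bound_affine by (simp add: integrable_X prob_space)

theorem prob_crossing_le:
  "prob {x \<in> space M. \<exists>n\<le>N. g n \<le> X n x} \<le> crossing_bound f g N 0 (expectation (X 0))"
proof -
  have "{x \<in> space M. \<exists>n\<le>N. g n \<le> X n x} = {x \<in> uncrossed 0. \<exists>k\<in>{0..N}. g k \<le> X k x}"
    unfolding uncrossed_def by auto
  moreover have "(\<integral>x\<in>uncrossed 0. crossing_bound f g N 0 (X 0 x) \<partial>M)
      = expectation (\<lambda>x. crossing_bound f g N 0 (X 0 x))"
    unfolding uncrossed_def crossing_bound_affine by (simp add: set_integral_space integrable_X)
  ultimately show ?thesis
    using prob_crossing_between_le[of 0 N] by (simp add: expectation_crossing_bound)
qed

theorem prob_crossing_ever_le:
  assumes weight: "\<And>N. c \<le> crossing_weight f g N 0" and start: "expectation (X 0) \<le> g 0"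
  shows "prob {x \<in> space M. \<exists>n. g n \<le> X n x} \<le> 1 - (g 0 - expectation (X 0)) / (g 0 + f 0) * c"
proof -
  let ?A = "\<lambda>N. {x \<in> space M. \<exists>n\<le>N. g n \<le> X n x}"
  have nonneg: "0 \<le> (g 0 - expectation (X 0)) / (g 0 + f 0)"
    using start barrier_gap_pos[of 0 0] by simp
  have "prob (?A N) \<le> 1 - (g 0 - expectation (X 0)) / (g 0 + f 0) * c" for N
  proof -
    have "crossing_bound f g N 0 (expectation (X 0))
        = 1 - (g 0 - expectation (X 0)) / (g 0 + f 0) * crossing_weight f g N 0"
      unfolding crossing_bound_def by (simp add: mult.commute)
    then show ?thesis
      using prob_crossing_le[of N] mult_left_mono[OF weight[of N] nonneg] by linarith
  qed
  moreover have "(\<lambda>N. prob (?A N)) \<longlonglongrightarrow> prob (\<Union>N. ?A N)"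
    by (intro finite_Lim_measure_incseq) (auto simp: incseq_def intro: order_trans)
  moreover have "(\<Union>N. ?A N) = {x \<in> space M. \<exists>n. g n \<le> X n x}"
    by auto
  ultimately show ?thesis
    by (metis (no_types, lifting) LIMSEQ_le_const2)
qed

end

context
  fixes f f' g :: "real \<Rightarrow> real"
  assumes f_mono: "mono_on {0..} f" and g_mono: "mono_on {0..} g"
    and f_deriv: "\<And>t. 0 \<le> t \<Longrightarrow> (f has_real_derivative f' t) (at t within {0..})"
    and barriers_apart: "- f 0 < g 0"
begin

lemma crossing_barriers_at_integers: "crossing_barriers (\<lambda>n. f (real n)) (\<lambda>n. g (real n))"
  by unfold_locales (auto intro!: monoI mono_onD[OF f_mono] mono_onD[OF g_mono] barriers_apart)

lemma barrier_gap_pos_real: "0 \<le> s \<Longrightarrow> s \<le> t \<Longrightarrow> 0 < g t + f s"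
  using mono_onD[OF g_mono, of 0 t] mono_onD[OF f_mono, of 0 s] barriers_apart by auto

lemma lower_barrier_deriv_nonneg: "0 \<le> t \<Longrightarrow> 0 \<le> f' t"
  using mono_on_Ici_imp_deriv_nonneg[OF f_mono _ f_deriv] by blast

lemma borel_measurable_barrier_integrand:
  "(\<lambda>t. ennreal (f' t / (g t + f t)) * indicator {0..} t) \<in> borel_measurable borel"
proof -
  have [measurable]: "(\<lambda>t. indicator {0..} t * f' t) \<in> borel_measurable borel"
    using f_deriv by (rule borel_measurable_derivative_Ici)
  have [measurable]: "(\<lambda>t. indicator {0..} t * h t) \<in> borel_measurable borel"
    if "mono_on {0..} h" for h :: "real \<Rightarrow> real"
    using borel_measurable_mono_on_fnc[OF that]
      borel_measurable_restrict_space_iff[of "{0..}" borel h]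
    by simp
  have "(\<lambda>t. ennreal ((indicator {0..} t * f' t)
        / (indicator {0..} t * g t + indicator {0..} t * f t)) * indicator {0..} t)
      \<in> borel_measurable borel"
    using f_mono g_mono by measurable
  then show ?thesis
    by (rule measurable_cong[THEN iffD1, rotated]) (simp split: split_indicator)
qed

lemma neg_ln_crossing_ratio_eq:
  "ennreal (- ln (crossing_ratio (\<lambda>n. f (real n)) (\<lambda>n. g (real n)) k))
    = (\<integral>\<^sup>+ t \<in> {real k..real (Suc k)}. ennreal (f' t / (g (real (Suc k)) + f t)) \<partial>lborel)"
proof -
  let ?c = "g (real (Suc k))" and ?I = "{real k..real (Suc k)}"
  have I_nonneg: "0 \<le> t" if "t \<in> ?I" for t
    using that by (auto intro: order_trans[OF of_nat_0_le_iff])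
  have pos: "0 < ?c + f t" if "t \<in> ?I" for t
    using that I_nonneg[OF that] by (intro barrier_gap_pos_real) auto
  have integrand_nonneg: "0 \<le> f' t / (?c + f t)" if "t \<in> ?I" for t
    using pos[OF that] lower_barrier_deriv_nonneg[OF I_nonneg[OF that]] by simp
  have "((\<lambda>s. ln (?c + f s)) has_real_derivative f' t / (?c + f t)) (at t within ?I)"
    if t: "t \<in> ?I" for t
  proof -
    have "(f has_real_derivative f' t) (at t within ?I)"
      using t by (intro DERIV_subset[OF f_deriv]) auto
    then have "((\<lambda>s. ?c + f s) has_real_derivative 0 + f' t) (at t within ?I)"
      by (rule DERIV_add[OF DERIV_const])
    from DERIV_chain2[OF DERIV_ln_divide[OF pos[OF t]] this] show ?thesis by simp
  qed
  then have ftc: "((\<lambda>t. f' t / (?c + f t)) has_integral ln (?c + f (Suc k)) - ln (?c + f k)) ?I"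
    by (intro fundamental_theorem_of_calculus)
      (auto simp: has_real_derivative_iff_has_vector_derivative)
  have "ln (?c + f (Suc k)) - ln (?c + f k)
      = - ln (crossing_ratio (\<lambda>n. f (real n)) (\<lambda>n. g (real n)) k)"
    unfolding crossing_ratio_def using pos[of "real k"] pos[of "real (Suc k)"] by (simp add: ln_div)
  then show ?thesis
    using nn_integral_has_integral_lebesgue'[OF integrand_nonneg ftc] by simp
qed

lemma neg_ln_crossing_ratio_le:
  "ennreal (- ln (crossing_ratio (\<lambda>n. f (real n)) (\<lambda>n. g (real n)) k))
    \<le> (\<integral>\<^sup>+ t \<in> {real k..<real (Suc k)}. ennreal (f' t / (g t + f t)) \<partial>lborel)"
proof -
  let ?c = "g (real (Suc k))" and ?I = "{real k..real (Suc k)}"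
  have "(\<integral>\<^sup>+ t \<in> ?I. ennreal (f' t / (?c + f t)) \<partial>lborel)
      \<le> (\<integral>\<^sup>+ t \<in> ?I. ennreal (f' t / (g t + f t)) \<partial>lborel)"
  proof (rule nn_integral_mono)
    fix t
    show "ennreal (f' t / (?c + f t)) * indicator ?I t
        \<le> ennreal (f' t / (g t + f t)) * indicator ?I t"
    proof (cases "t \<in> ?I")
      case True
      then have "0 \<le> t" by (auto intro: order_trans[OF of_nat_0_le_iff])
      moreover have "g t \<le> ?c"
        using True \<open>0 \<le> t\<close> by (intro mono_onD[OF g_mono]) auto
      ultimately have "f' t / (?c + f t) \<le> f' t / (g t + f t)"
        using barrier_gap_pos_real[of t t] lower_barrier_deriv_nonneg[of t]
        by (intro divide_left_mono) auto
      then show ?thesis using True by (simp add: ennreal_leI)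
    qed simp
  qed
  also have "\<dots> = (\<integral>\<^sup>+ t \<in> {real k..<real (Suc k)}. ennreal (f' t / (g t + f t)) \<partial>lborel)"
    using AE_lborel_singleton[of "real (Suc k)"]
    by (intro nn_integral_cong_AE) (auto elim!: eventually_mono split: split_indicator)
  finally show ?thesis
    unfolding neg_ln_crossing_ratio_eq .
qed

lemma neg_ln_crossing_weight_le:
  "ennreal (- ln (crossing_weight (\<lambda>n. f (real n)) (\<lambda>n. g (real n)) N 0))
    \<le> (\<integral>\<^sup>+ t \<in> {0..}. ennreal (f' t / (g t + f t)) \<partial>lborel)"
proof -
  interpret crossing_barriers "\<lambda>n. f (real n)" "\<lambda>n. g (real n)"
    by (rule crossing_barriers_at_integers)
  let ?r = "crossing_ratio (\<lambda>n. f (real n)) (\<lambda>n. g (real n))"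
  let ?h = "\<lambda>t. ennreal (f' t / (g t + f t)) * indicator {0..} t"
  note borel_measurable_barrier_integrand [measurable]
  have pieces: "(\<Sum>k<n. \<integral>\<^sup>+ t \<in> {real k..<real (Suc k)}. ?h t \<partial>lborel)
      = (\<integral>\<^sup>+ t \<in> {0..<real n}. ?h t \<partial>lborel)" for n
  proof (induction n)
    case (Suc n)
    have "{0..<real (Suc n)} = {0..<real n} \<union> {real n..<real (Suc n)}"
      by auto
    then show ?case
      using Suc by (simp add: nn_integral_disjoint_pair)
  qed simp
  have "ennreal (- ln (crossing_weight (\<lambda>n. f (real n)) (\<lambda>n. g (real n)) N 0))
      = (\<Sum>k<N. ennreal (- ln (?r k)))"
  proof -
    have "?r k \<noteq> 0" "0 \<le> - ln (?r k)" for k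
      using crossing_ratio_pos[of k] crossing_ratio_le_1[of k] by auto
    then show ?thesis
      unfolding crossing_weight_def atLeast0LessThan by (simp add: ln_prod sum_negf)
  qed
  also have "\<dots> \<le> (\<Sum>k<N. \<integral>\<^sup>+ t \<in> {real k..<real (Suc k)}. ennreal (f' t / (g t + f t)) \<partial>lborel)"
    by (intro sum_mono neg_ln_crossing_ratio_le)
  also have "\<dots> = (\<Sum>k<N. \<integral>\<^sup>+ t \<in> {real k..<real (Suc k)}. ?h t \<partial>lborel)"
  proof (intro sum.cong nn_integral_cong)
    fix k t
    show "ennreal (f' t / (g t + f t)) * indicator {real k..<real (Suc k)} t
        = ?h t * indicator {real k..<real (Suc k)} t"
      by (cases "0 \<le> t") (auto simp: indicator_def)
  qed simp
  also have "\<dots> \<le> (\<integral>\<^sup>+ t. ?h t \<partial>lborel)"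
    unfolding pieces by (intro nn_integral_mono) (simp split: split_indicator)
  finally show ?thesis .
qed

lemma exp_neg_integral_le_crossing_weight:
  "(let I = (\<integral>\<^sup>+ t \<in> {0..}. ennreal (f' t / (g t + f t)) \<partial>lborel)
    in if I = \<infinity> then 0 else exp (- enn2real I))
   \<le> crossing_weight (\<lambda>n. f (real n)) (\<lambda>n. g (real n)) N 0"
proof -
  interpret crossing_barriers "\<lambda>n. f (real n)" "\<lambda>n. g (real n)"
    by (rule crossing_barriers_at_integers)
  let ?w = "crossing_weight (\<lambda>n. f (real n)) (\<lambda>n. g (real n)) N 0"
  let ?I = "\<integral>\<^sup>+ t \<in> {0..}. ennreal (f' t / (g t + f t)) \<partial>lborel"
  have bound: "- ln ?w \<le> enn2real ?I" if finite: "?I \<noteq> \<infinity>"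
  proof -
    have "enn2real (ennreal (- ln ?w)) \<le> enn2real ?I"
      using neg_ln_crossing_weight_le[of N] finite
      by (intro enn2real_mono) (auto simp: top.not_eq_extremum)
    moreover have "0 \<le> - ln ?w"
      using crossing_weight_pos[of N 0] crossing_weight_le_1[of N 0] by simp
    ultimately show ?thesis by simp
  qed
  show ?thesis
  proof (cases "?I = \<infinity>")
    case False
    have "exp (- enn2real ?I) \<le> exp (ln ?w)"
      using bound[OF False] by simp
    then show ?thesis
      using False crossing_weight_pos[of N 0] by (simp add: Let_def)
  qed (simp add: Let_def less_imp_le crossing_weight_pos)
qed

end

theorem corollary2:
  fixes f f' g :: "real \<Rightarrow> real"
    and M :: "'a measure" and F :: "nat \<Rightarrow> 'a measure" and X :: "nat \<Rightarrow> 'a \<Rightarrow> real"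
  assumes f_nonneg: "\<And>t. t \<ge> 0 \<Longrightarrow> f t \<ge> 0"
    and g_nonneg: "\<And>t. t \<ge> 0 \<Longrightarrow> g t \<ge> 0"
    and f_mono: "mono_on {0..} f"
    and g_mono: "mono_on {0..} g"
    and f_deriv: "\<And>t. t \<ge> 0 \<Longrightarrow> (f has_real_derivative f' t) (at t within {0..})"
    and fg0: "- f 0 < g 0"
    and prob: "prob_space M"
    and filt: "discrete_filtration M F"
    and smart: "supermartingale M F X"
    and lower: "\<And>n. AE x in M. X n x \<ge> - f (real n)"
    and EM0: "integral\<^sup>L M (X 0) \<in> {- f 0 .. g 0}"
  shows "measure M {x \<in> space M. \<exists>n. X n x \<ge> g (real n)}
    \<le> 1 - (g 0 - integral\<^sup>L M (X 0)) / (g 0 + f 0) *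
         (let I = (\<integral>\<^sup>+ t \<in> {0..}. ennreal (f' t / (g t + f t)) \<partial>lborel)
          in if I = \<infinity> then 0 else exp (- enn2real I))"
proof -
  have "discrete_supermartingale M F X"
    using prob filt smart
    by (simp add: discrete_supermartingale_def discrete_supermartingale_axioms_def)
  then interpret barrier_supermartingale M F X "\<lambda>n. f (real n)" "\<lambda>n. g (real n)"
    using crossing_barriers_at_integers[OF f_mono g_mono f_deriv fg0] lower
    by (simp add: barrier_supermartingale_def barrier_supermartingale_axioms_def)
  have "(let I = (\<integral>\<^sup>+ t \<in> {0..}. ennreal (f' t / (g t + f t)) \<partial>lborel)
      in if I = \<infinity> then 0 else exp (- enn2real I))
    \<le> crossing_weight (\<lambda>n. f (real n)) (\<lambda>n. g (real n)) N 0" for N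
    by (rule exp_neg_integral_le_crossing_weight[OF f_mono g_mono f_deriv fg0])
  then show ?thesis
    using prob_crossing_ever_le EM0 by simp
qed

end
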